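(* For every set of formulas $\Gamma$ and every formula $\alpha$: if $\Gamma \vDash_{\bf Km} \alpha$ then $\Gamma \vdash_{\bf Km} \alpha$.
   Context: Formulas are built from a denumerable set of propositional variables $p_1,p_2,\ldots$ by the unary connectives $\neg$, $\Box$ and the binary connective $\to$; $For$ is the set of all formulas. Abbreviations: $\Diamond\alpha:=\neg\Box\neg\alpha$, $\alpha\vee\beta:=\neg\alpha\to\beta$, $\alpha\wedge\beta:=\neg(\alpha\to\neg\beta)$. Hilbert calculus ${\bf Km}$: axioms are all instances (over $For$) of the axiom schemas of a standard Hilbert calculus for classical propositional logic in the signature $\{\neg,\to\}$, together with all instances of: (K') $\Diamond\alpha\to(\Box(\alpha\to\beta)\to(\Box\alpha\to\Box\beta))$; (K1') $\Diamond\neg\beta\to(\Box(\alpha\to\beta)\to(\Diamond\alpha\to\Diamond\beta))$; (K2') $\Diamond\alpha\to(\Diamond(\alpha\to\beta)\to(\Box\alpha\to\Diamond\beta))$; (M3') $(\Diamond\alpha\vee\Diamond\neg\alpha)\to(\Diamond\beta\to\Diamond(\alpha\to\beta))$; (M4') $\Diamond\neg\beta\to(\Diamond\neg\alpha\to\Diamond(\alpha\to\beta))$; (I1) $(\Box\alpha\wedge\Box\neg\alpha)\to(\Box(\alpha\to\beta)\wedge\Box\neg(\alpha\to\beta))$; (I2) $(\Box\beta\wedge\Box\neg\beta)\to(\Box(\alpha\to\beta)\wedge\Box\neg(\alpha\to\beta))$; (M1) $\neg\Diamond\alpha\to\Box(\alpha\to\beta)$; (M2) $\Box\beta\to\Box(\alpha\to\beta)$;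 (DN1) $\Box\alpha\to\Box\neg\neg\alpha$; (DN2) $\Box\neg\neg\alpha\to\Box\alpha$. Modus ponens is the only inference rule; $\Gamma\vdash_{\bf Km}\alpha$ means there is a derivation of $\alpha$ from $\Gamma$. Nmatrix semantics: an Nmatrix has a domain $A$, a set $D\subseteq A$ of designated values and, for each connective, a multioperation assigning to each tuple of arguments a nonempty subset of $A$. A valuation is a map $v:For\to A$ with $v(\neg\alpha)\in\tilde\neg(v(\alpha))$, $v(\Box\alpha)\in\tilde\Box(v(\alpha))$, $v(\alpha\to\beta)\in v(\alpha)\tilde\to v(\beta)$. $\Gamma\vDash\alpha$ iff every valuation $v$ with $v(\gamma)\in D$ for all $\gamma\in\Gamma$ has $v(\alpha)\in D$. The Nmatrix for ${\bf Km}$ (consequence $\vDash_{\bf Km}$): domain $\{T^+,C^+,F^+,I^+,T^-,C^-,F^-,I^-\}$, designated set $+=\{T^+,C^+,F^+,I^+\}$, and $-=\{T^-,C^-,F^-,I^-\}$. Negation: $\tilde\neg T^+=\{F^-\}$, $\tilde\neg C^+=\{C^-\}$, $\tilde\neg F^+=\{T^-\}$, $\tilde\neg I^+=\{I^-\}$, $\tilde\neg T^-=\{F^+\}$, $\tilde\neg C^-=\{C^+\}$, $\tilde\neg F^-=\{T^+\}$, $\tilde\neg I^-=\{I^+\}$. Necessity: $\tilde\Box x=+$ if $x\in\{T^+,T^-,I^+,I^-\}$, and $\tilde\Box x=-$ otherwise. Implication (row $x$, column $y$ gives $x\tilde\to y$): $$\begin{array}{c|cccccccc} \to & T^+ & C^+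 & F^+ & I^+ & T^- & C^- & F^- & I^-\\\hline T^+ & \{T^+\}&\{C^+\}&\{F^+\}&\{I^+\}&\{T^-\}&\{C^-\}&\{F^-\}&\{I^-\}\\ C^+ & \{T^+\}&\{T^+,C^+\}&\{C^+\}&\{I^+\}&\{T^-\}&\{T^-,C^-\}&\{C^-\}&\{I^-\}\\ F^+ & \{T^+\}&\{T^+\}&\{T^+\}&\{I^+\}&\{T^-\}&\{T^-\}&\{T^-\}&\{I^-\}\\ I^+ & \{I^+\}&\{I^+\}&\{I^+\}&\{I^+\}&\{I^-\}&\{I^-\}&\{I^-\}&\{I^-\}\\ T^- & \{T^+\}&\{C^+\}&\{F^+\}&\{I^+\}&\{T^+\}&\{C^+\}&\{F^+\}&\{I^+\}\\ C^- & \{T^+\}&\{T^+,C^+\}&\{C^+\}&\{I^+\}&\{T^+\}&\{T^+,C^+\}&\{C^+\}&\{I^+\}\\ F^- & \{T^+\}&\{T^+\}&\{T^+\}&\{I^+\}&\{T^+\}&\{T^+\}&\{T^+\}&\{I^+\}\\ I^- & \{I^+\}&\{I^+\}&\{I^+\}&\{I^+\}&\{I^+\}&\{I^+\}&\{I^+\}&\{I^+\}\end{array}$$ *)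

theory Defs
  imports Main
begin

datatype form =
    Var nat
  | Neg form
  | Box form
  | Imp form form

definition Dia :: "form \<Rightarrow> form" where
  "Dia a = Neg (Box (Neg a))"

definition Or :: "form \<Rightarrow> form \<Rightarrow> form" where
  "Or a b = Imp (Neg a) b"

definition And :: "form \<Rightarrow> form \<Rightarrow> form" where
  "And a b = Neg (Imp a (Neg b))"

text \<open>Classical propositional axioms (Mendelson's system in the signature Neg, Imp),
  instantiated over all formulas.\<close>

inductive cpl_axiom :: "form \<Rightarrow> bool" where
  A1: "cpl_axiom (Imp a (Imp b a))"
| A2: "cpl_axiom (Imp (Imp a (Imp b c)) (Imp (Imp a b) (Imp a c)))"
| A3: "cpl_axiom (Imp (Imp (Neg b) (Neg a)) (Imp (Imp (Neg b) a) b))"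

inductive modal_axiom :: "form \<Rightarrow> bool" where
  K':  "modal_axiom (Imp (Dia a) (Imp (Box (Imp a b)) (Imp (Box a) (Box b))))"
| K1': "modal_axiom (Imp (Dia (Neg b)) (Imp (Box (Imp a b)) (Imp (Dia a) (Dia b))))"
| K2': "modal_axiom (Imp (Dia a) (Imp (Dia (Imp a b)) (Imp (Box a) (Dia b))))"
| M3': "modal_axiom (Imp (Or (Dia a) (Dia (Neg a))) (Imp (Dia b) (Dia (Imp a b))))"
| M4': "modal_axiom (Imp (Dia (Neg b)) (Imp (Dia (Neg a)) (Dia (Imp a b))))"
| I1:  "modal_axiom (Imp (And (Box a) (Box (Neg a))) (And (Box (Imp a b)) (Box (Neg (Imp a b)))))"
| I2:  "modal_axiom (Imp (And (Box b) (Box (Neg b))) (And (Box (Imp a b)) (Box (Neg (Imp a b)))))"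
| M1:  "modal_axiom (Imp (Neg (Dia a)) (Box (Imp a b)))"
| M2:  "modal_axiom (Imp (Box b) (Box (Imp a b)))"
| DN1: "modal_axiom (Imp (Box a) (Box (Neg (Neg a))))"
| DN2: "modal_axiom (Imp (Box (Neg (Neg a))) (Box a))"

definition Km_axiom :: "form \<Rightarrow> bool" where
  "Km_axiom a \<longleftrightarrow> cpl_axiom a \<or> modal_axiom a"

inductive Km_derives :: "form set \<Rightarrow> form \<Rightarrow> bool" where
  prem: "a \<in> \<Gamma> \<Longrightarrow> Km_derives \<Gamma> a"
| ax:   "Km_axiom a \<Longrightarrow> Km_derives \<Gamma> a"
| mp:   "Km_derives \<Gamma> a \<Longrightarrow> Km_derives \<Gamma> (Imp a b) \<Longrightarrow> Km_derives \<Gamma> b"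

text \<open>Tp = T+, Cp = C+, ..., Im = I-.\<close>

datatype val = Tp | Cp | Fp | Ip | Tm | Cm | Fm | Im

definition designated :: "val set" where
  "designated = {Tp, Cp, Fp, Ip}"

definition antidesignated :: "val set" where
  "antidesignated = {Tm, Cm, Fm, Im}"

fun neg_m :: "val \<Rightarrow> val set" where
  "neg_m Tp = {Fm}"
| "neg_m Cp = {Cm}"
| "neg_m Fp = {Tm}"
| "neg_m Ip = {Im}"
| "neg_m Tm = {Fp}"
| "neg_m Cm = {Cp}"
| "neg_m Fm = {Tp}"
| "neg_m Im = {Ip}"

definition box_m :: "val \<Rightarrow> val set" where
  "box_m x = (if x \<in> {Tp, Tm, Ip, Im} then designated else antidesignated)"

fun imp_m :: "val \<Rightarrow> val \<Rightarrow> val set" where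
  "imp_m Tp Tp = {Tp}" |
  "imp_m Tp Cp = {Cp}" |
  "imp_m Tp Fp = {Fp}" |
  "imp_m Tp Ip = {Ip}" |
  "imp_m Tp Tm = {Tm}" |
  "imp_m Tp Cm = {Cm}" |
  "imp_m Tp Fm = {Fm}" |
  "imp_m Tp Im = {Im}" |
  "imp_m Cp Tp = {Tp}" |
  "imp_m Cp Cp = {Tp, Cp}" |
  "imp_m Cp Fp = {Cp}" |
  "imp_m Cp Ip = {Ip}" |
  "imp_m Cp Tm = {Tm}" |
  "imp_m Cp Cm = {Tm, Cm}" |
  "imp_m Cp Fm = {Cm}" |
  "imp_m Cp Im = {Im}" |
  "imp_m Fp Tp = {Tp}" |
  "imp_m Fp Cp = {Tp}" |
  "imp_m Fp Fp = {Tp}" |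
  "imp_m Fp Ip = {Ip}" |
  "imp_m Fp Tm = {Tm}" |
  "imp_m Fp Cm = {Tm}" |
  "imp_m Fp Fm = {Tm}" |
  "imp_m Fp Im = {Im}" |
  "imp_m Ip Tp = {Ip}" |
  "imp_m Ip Cp = {Ip}" |
  "imp_m Ip Fp = {Ip}" |
  "imp_m Ip Ip = {Ip}" |
  "imp_m Ip Tm = {Im}" |
  "imp_m Ip Cm = {Im}" |
  "imp_m Ip Fm = {Im}" |
  "imp_m Ip Im = {Im}" |
  "imp_m Tm Tp = {Tp}" |
  "imp_m Tm Cp = {Cp}" |
  "imp_m Tm Fp = {Fp}" |
  "imp_m Tm Ip = {Ip}" |
  "imp_m Tm Tm = {Tp}" |
  "imp_m Tm Cm = {Cp}" |
  "imp_m Tm Fm = {Fp}" |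
  "imp_m Tm Im = {Ip}" |
  "imp_m Cm Tp = {Tp}" |
  "imp_m Cm Cp = {Tp, Cp}" |
  "imp_m Cm Fp = {Cp}" |
  "imp_m Cm Ip = {Ip}" |
  "imp_m Cm Tm = {Tp}" |
  "imp_m Cm Cm = {Tp, Cp}" |
  "imp_m Cm Fm = {Cp}" |
  "imp_m Cm Im = {Ip}" |
  "imp_m Fm Tp = {Tp}" |
  "imp_m Fm Cp = {Tp}" |
  "imp_m Fm Fp = {Tp}" |
  "imp_m Fm Ip = {Ip}" |
  "imp_m Fm Tm = {Tp}" |
  "imp_m Fm Cm = {Tp}" |
  "imp_m Fm Fm = {Tp}" |
  "imp_m Fm Im = {Ip}" |
  "imp_m Im Tp = {Ip}" |
  "imp_m Im Cp = {Ip}" |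
  "imp_m Im Fp = {Ip}" |
  "imp_m Im Ip = {Ip}" |
  "imp_m Im Tm = {Ip}" |
  "imp_m Im Cm = {Ip}" |
  "imp_m Im Fm = {Ip}" |
  "imp_m Im Im = {Ip}"

definition Km_valuation :: "(form \<Rightarrow> val) \<Rightarrow> bool" where
  "Km_valuation v \<longleftrightarrow>
     (\<forall>a. v (Neg a) \<in> neg_m (v a)) \<and>
     (\<forall>a. v (Box a) \<in> box_m (v a)) \<and>
     (\<forall>a b. v (Imp a b) \<in> imp_m (v a) (v b))"

definition Km_entails :: "form set \<Rightarrow> form \<Rightarrow> bool" where
  "Km_entails \<Gamma> a \<longleftrightarrow>
     (\<forall>v. Km_valuation v \<longrightarrow> (\<forall>g\<in>\<Gamma>. v g \<in> designated) \<longrightarrow> v a \<in> designated)"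

end

theory Submission
  imports Defs
begin

text \<open>Canonical model. If \<open>\<Gamma> \<nturnstile> \<alpha>\<close>, extend \<open>\<Gamma> \<union> {\<not>\<alpha>}\<close> to a maximal consistent set \<open>D\<close>.
  Give each formula \<open>a\<close> the value whose sign records \<open>a \<in> D\<close> and whose letter records which of
  \<open>\<box>a\<close>, \<open>\<box>\<not>a\<close> lie in \<open>D\<close>: \<open>T\<close> for \<open>\<box>a\<close> only, \<open>F\<close> for \<open>\<box>\<not>a\<close> only, \<open>I\<close> for both, \<open>C\<close> for
  neither. Negation is respected thanks to DN1/DN2, necessity automatically (its multioperation
  only prescribes the sign), and implication because the remaining modal axioms rule out
  exactly those letters of \<open>a\<close>, \<open>b\<close>, \<open>a \<rightarrow> b\<close> that the table forbids. This valuation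
  designates \<open>\<Gamma>\<close> but not \<open>\<alpha>\<close>.\<close>

lemma Km_derives_mono: "Km_derives \<Gamma> a \<Longrightarrow> \<Gamma> \<subseteq> \<Delta> \<Longrightarrow> Km_derives \<Delta> a"
proof (induction rule: Km_derives.induct)
  case (prem a \<Gamma>)
  then show ?case by (blast intro: Km_derives.prem)
next
  case (ax a \<Gamma>)
  then show ?case by (blast intro: Km_derives.ax)
next
  case (mp \<Gamma> a b)
  then show ?case by (blast intro: Km_derives.mp)
qed

lemma Km_derives_finite_subset:
  "Km_derives \<Gamma> a \<Longrightarrow> \<exists>F\<subseteq>\<Gamma>. finite F \<and> Km_derives F a"
proof (induction rule: Km_derives.induct)
  case (prem a \<Gamma>)
  then show ?case by (intro exI[of _ "{a}"]) (auto intro: Km_derives.prem)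
next
  case (ax a \<Gamma>)
  then show ?case by (intro exI[of _ "{}"]) (auto intro: Km_derives.ax)
next
  case (mp \<Gamma> a b)
  then obtain F1 F2 where F: "F1 \<subseteq> \<Gamma>" "finite F1" "Km_derives F1 a"
    "F2 \<subseteq> \<Gamma>" "finite F2" "Km_derives F2 (Imp a b)" by blast
  then have "Km_derives (F1 \<union> F2) b"
    by (meson Km_derives.mp Km_derives_mono sup_ge1 sup_ge2)
  with F show ?case by (intro exI[of _ "F1 \<union> F2"]) auto
qed

lemma Km_derives_A1: "Km_derives \<Gamma> (Imp a (Imp b a))"
  by (rule Km_derives.ax) (simp add: Km_axiom_def cpl_axiom.intros)

lemma Km_derives_A2: "Km_derives \<Gamma> (Imp (Imp a (Imp b c)) (Imp (Imp a b) (Imp a c)))"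
  by (rule Km_derives.ax) (simp add: Km_axiom_def cpl_axiom.intros)

lemma Km_derives_A3: "Km_derives \<Gamma> (Imp (Imp (Neg b) (Neg a)) (Imp (Imp (Neg b) a) b))"
  by (rule Km_derives.ax) (simp add: Km_axiom_def cpl_axiom.intros)

lemma Km_derives_imp_refl: "Km_derives \<Gamma> (Imp a a)"
  by (meson Km_derives.mp Km_derives_A1 Km_derives_A2)

lemma Km_deduction: "Km_derives (insert a \<Gamma>) b \<Longrightarrow> Km_derives \<Gamma> (Imp a b)"
proof (induction "insert a \<Gamma>" b rule: Km_derives.induct)
  case (prem b)
  then show ?case
    by (metis Km_derives.mp Km_derives.prem Km_derives_A1 Km_derives_imp_refl insertE)
next
  case (ax b)
  then show ?case by (rule Km_derives.mp[OF Km_derives.ax Km_derives_A1])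
next
  case (mp b c)
  then show ?case by (meson Km_derives.mp Km_derives_A2)
qed

lemma Km_derives_by_contradiction:
  assumes "Km_derives (insert (Neg b) \<Gamma>) c" and "Km_derives (insert (Neg b) \<Gamma>) (Neg c)"
  shows "Km_derives \<Gamma> b"
  by (meson assms Km_deduction Km_derives.mp Km_derives_A3)

definition Km_consistent :: "form set \<Rightarrow> bool" where
  "Km_consistent S \<longleftrightarrow> \<not> (\<exists>c. Km_derives S c \<and> Km_derives S (Neg c))"

lemma Km_inconsistent_derives_all:
  "Km_derives S c \<Longrightarrow> Km_derives S (Neg c) \<Longrightarrow> Km_derives S b"
  by (meson Km_derives_by_contradiction Km_derives_mono subset_insertI)

lemma Km_consistent_insert_Neg:
  "\<not> Km_derives \<Gamma> a \<Longrightarrow> Km_consistent (insert (Neg a) \<Gamma>)"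
  unfolding Km_consistent_def using Km_derives_by_contradiction by blast

lemma Km_consistent_Union_chain:
  assumes "C \<noteq> {}" and "subset.chain {S. Km_consistent S} C"
  shows "Km_consistent (\<Union>C)"
  unfolding Km_consistent_def
proof
  assume "\<exists>c. Km_derives (\<Union>C) c \<and> Km_derives (\<Union>C) (Neg c)"
  then obtain c F1 F2 where F: "F1 \<subseteq> \<Union>C" "finite F1" "Km_derives F1 c"
    "F2 \<subseteq> \<Union>C" "finite F2" "Km_derives F2 (Neg c)"
    using Km_derives_finite_subset by meson
  then obtain B where B: "B \<in> C" "F1 \<union> F2 \<subseteq> B"
    using finite_subset_Union_chain[of "F1 \<union> F2" C "{S. Km_consistent S}"] assms by auto
  with assms(2) have "Km_consistent B"
    unfolding subset.chain_def by blast
  moreover from F B have "Km_derives B c" "Km_derives B (Neg c)"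
    by (meson Km_derives_mono le_supE)+
  ultimately show False
    unfolding Km_consistent_def by blast
qed

definition val_of :: "bool \<Rightarrow> bool \<Rightarrow> bool \<Rightarrow> val" where
  "val_of p B N = (if p then
      (if B then (if N then Ip else Tp) else (if N then Fp else Cp))
    else
      (if B then (if N then Im else Tm) else (if N then Fm else Cm)))"

text \<open>The nine hypotheses are the axioms K', K1', K2', M3', M4', I1, I2, M1, M2, reading
  \<open>Ba, Bb, Bi\<close> as \<open>\<box>x \<in> D\<close> and \<open>Na, Nb, Ni\<close> as \<open>\<box>\<not>x \<in> D\<close> for \<open>x = a, b, a \<rightarrow> b\<close>
  in a maximal consistent set \<open>D\<close> (so \<open>\<not> Nx\<close> means \<open>\<diamond>x \<in> D\<close>).\<close>

lemma val_of_Imp [rule_format (no_asm)]: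
  "\<forall>pa pb Ba Na Bb Nb Bi Ni.
     (\<not> Na \<longrightarrow> Bi \<longrightarrow> Ba \<longrightarrow> Bb) \<longrightarrow>
     (\<not> Bb \<longrightarrow> Bi \<longrightarrow> \<not> Na \<longrightarrow> \<not> Nb) \<longrightarrow>
     (\<not> Na \<longrightarrow> \<not> Ni \<longrightarrow> Ba \<longrightarrow> \<not> Nb) \<longrightarrow>
     (\<not> Na \<or> \<not> Ba \<longrightarrow> \<not> Nb \<longrightarrow> \<not> Ni) \<longrightarrow>
     (\<not> Bb \<longrightarrow> \<not> Ba \<longrightarrow> \<not> Ni) \<longrightarrow>
     (Ba \<and> Na \<longrightarrow> Bi \<and> Ni) \<longrightarrow>
     (Bb \<and> Nb \<longrightarrow> Bi \<and> Ni) \<longrightarrow>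
     (Na \<longrightarrow> Bi) \<longrightarrow>
     (Bb \<longrightarrow> Bi) \<longrightarrow>
     val_of (\<not> pa \<or> pb) Bi Ni \<in> imp_m (val_of pa Ba Na) (val_of pb Bb Nb)"
  unfolding val_of_def
  apply (simp only: all_bool_eq)
  apply (simp only: if_True if_False simp_thms imp_m.simps)
  apply (simp only: insert_iff singleton_iff val.distinct simp_thms)
  done

locale Km_maximal_consistent =
  fixes D :: "form set"
  assumes consistent: "Km_consistent D"
    and maximal: "\<And>X. D \<subseteq> X \<Longrightarrow> Km_consistent X \<Longrightarrow> X = D"
begin

lemma derives_mem: "Km_derives D b \<Longrightarrow> b \<in> D"
proof -
  assume b: "Km_derives D b"
  have "Km_consistent (insert b D)"
    unfolding Km_consistent_def
  proof
    assume "\<exists>c. Km_derives (insert b D) c \<and> Km_derives (insert b D) (Neg c)"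
    then obtain c where "Km_derives (insert b D) c" "Km_derives (insert b D) (Neg c)"
      by blast
    then have "Km_derives D c" "Km_derives D (Neg c)"
      using Km_derives.mp[OF b Km_deduction] by blast+
    with consistent show False unfolding Km_consistent_def by blast
  qed
  then show ?thesis using maximal by blast
qed

lemma Neg_mem_iff: "Neg b \<in> D \<longleftrightarrow> b \<notin> D"
proof
  assume "Neg b \<in> D"
  then show "b \<notin> D"
    using consistent Km_derives.prem[of b D] Km_derives.prem[of "Neg b" D]
    unfolding Km_consistent_def by blast
next
  assume "b \<notin> D"
  show "Neg b \<in> D"
  proof (rule ccontr)
    assume "Neg b \<notin> D"
    then have "\<not> Km_consistent (insert (Neg b) D)"
      using maximal[of "insert (Neg b) D"] by blast
    then obtain c where "Km_derives (insert (Neg b) D) c" "Km_derives (insert (Neg b) D) (Neg c)"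
      unfolding Km_consistent_def by blast
    then have "Km_derives D b" by (rule Km_derives_by_contradiction)
    with \<open>b \<notin> D\<close> show False using derives_mem by blast
  qed
qed

lemma Imp_mem_iff: "Imp a b \<in> D \<longleftrightarrow> a \<notin> D \<or> b \<in> D"
proof
  assume "Imp a b \<in> D"
  then show "a \<notin> D \<or> b \<in> D"
    using derives_mem Km_derives.mp[OF Km_derives.prem[of a D] Km_derives.prem[of "Imp a b" D]]
    by blast
next
  assume ab: "a \<notin> D \<or> b \<in> D"
  show "Imp a b \<in> D"
  proof (cases "b \<in> D")
    case True
    then show ?thesis
      using derives_mem Km_derives.mp[OF Km_derives.prem[of b D] Km_derives_A1[of D b a]] by blast
  next
    case False
    with ab have "Neg a \<in> D" using Neg_mem_iff by blast
    then have "Km_derives (insert a D) b"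
      using Km_inconsistent_derives_all[of "insert a D" a b]
        Km_derives.prem[of a "insert a D"] Km_derives.prem[of "Neg a" "insert a D"] by blast
    then show ?thesis using Km_deduction derives_mem by blast
  qed
qed

lemma modal_axiom_mem: "modal_axiom x \<Longrightarrow> x \<in> D"
  using derives_mem Km_derives.ax Km_axiom_def by blast

lemma Box_Neg_Neg_mem_iff: "Box (Neg (Neg a)) \<in> D \<longleftrightarrow> Box a \<in> D"
  using modal_axiom_mem[OF modal_axiom.DN1[of a]] modal_axiom_mem[OF modal_axiom.DN2[of a]]
  by (auto simp: Imp_mem_iff)

definition canonical_val :: "form \<Rightarrow> val" where
  "canonical_val b = val_of (b \<in> D) (Box b \<in> D) (Box (Neg b) \<in> D)"

lemma canonical_val_Neg: "canonical_val (Neg a) \<in> neg_m (canonical_val a)"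
  using Neg_mem_iff[of a] Box_Neg_Neg_mem_iff[of a]
  unfolding canonical_val_def val_of_def by auto

lemma canonical_val_Box: "canonical_val (Box a) \<in> box_m (canonical_val a)"
  unfolding canonical_val_def val_of_def box_m_def designated_def antidesignated_def
  by auto

lemma canonical_val_Imp: "canonical_val (Imp a b) \<in> imp_m (canonical_val a) (canonical_val b)"
proof -
  note mem_iff = Imp_mem_iff Neg_mem_iff Box_Neg_Neg_mem_iff Dia_def Or_def And_def
  have K': "Box (Neg a) \<notin> D \<longrightarrow> Box (Imp a b) \<in> D \<longrightarrow> Box a \<in> D \<longrightarrow> Box b \<in> D"
    using modal_axiom_mem[OF modal_axiom.K'[of a b]] by (auto simp: mem_iff)
  have K1': "Box b \<notin> D \<longrightarrow> Box (Imp a b) \<in> D \<longrightarrow> Box (Neg a) \<notin> D \<longrightarrow> Box (Neg b) \<notin> D"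
    using modal_axiom_mem[OF modal_axiom.K1'[of b a]] by (auto simp: mem_iff)
  have K2': "Box (Neg a) \<notin> D \<longrightarrow> Box (Neg (Imp a b)) \<notin> D \<longrightarrow> Box a \<in> D \<longrightarrow> Box (Neg b) \<notin> D"
    using modal_axiom_mem[OF modal_axiom.K2'[of a b]] by (auto simp: mem_iff)
  have M3': "Box (Neg a) \<notin> D \<or> Box a \<notin> D \<longrightarrow> Box (Neg b) \<notin> D \<longrightarrow> Box (Neg (Imp a b)) \<notin> D"
    using modal_axiom_mem[OF modal_axiom.M3'[of a b]] by (auto simp: mem_iff)
  have M4': "Box b \<notin> D \<longrightarrow> Box a \<notin> D \<longrightarrow> Box (Neg (Imp a b)) \<notin> D"
    using modal_axiom_mem[OF modal_axiom.M4'[of b a]] by (auto simp: mem_iff)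
  have I1: "Box a \<in> D \<and> Box (Neg a) \<in> D \<longrightarrow> Box (Imp a b) \<in> D \<and> Box (Neg (Imp a b)) \<in> D"
    using modal_axiom_mem[OF modal_axiom.I1[of a b]] by (auto simp: mem_iff)
  have I2: "Box b \<in> D \<and> Box (Neg b) \<in> D \<longrightarrow> Box (Imp a b) \<in> D \<and> Box (Neg (Imp a b)) \<in> D"
    using modal_axiom_mem[OF modal_axiom.I2[of b a]] by (auto simp: mem_iff)
  have M1: "Box (Neg a) \<in> D \<longrightarrow> Box (Imp a b) \<in> D"
    using modal_axiom_mem[OF modal_axiom.M1[of a b]] by (auto simp: mem_iff)
  have M2: "Box b \<in> D \<longrightarrow> Box (Imp a b) \<in> D"
    using modal_axiom_mem[OF modal_axiom.M2[of b a]] by (auto simp: mem_iff)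
  show ?thesis
    unfolding canonical_val_def Imp_mem_iff
    by (rule val_of_Imp[OF K' K1' K2' M3' M4' I1 I2 M1 M2])
qed

lemma Km_valuation_canonical_val: "Km_valuation canonical_val"
  unfolding Km_valuation_def
  using canonical_val_Neg canonical_val_Box canonical_val_Imp by blast

lemma canonical_val_designated_iff: "canonical_val b \<in> designated \<longleftrightarrow> b \<in> D"
  unfolding canonical_val_def val_of_def designated_def by auto

end

lemma Km_maximal_consistent_extension:
  assumes "Km_consistent S"
  obtains D where "S \<subseteq> D" "Km_maximal_consistent D"
proof -
  let ?A = "{D. S \<subseteq> D \<and> Km_consistent D}"
  have "\<exists>D\<in>?A. \<forall>X\<in>?A. D \<subseteq> X \<longrightarrow> X = D"
  proof (rule subset_Zorn_nonempty)
    show "?A \<noteq> {}" using assms by blast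
  next
    fix C assume "C \<noteq> {}" and chain: "subset.chain ?A C"
    then have "S \<subseteq> \<Union>C"
      unfolding subset.chain_def by blast
    moreover have "subset.chain {S. Km_consistent S} C"
      using chain unfolding subset.chain_def by blast
    then have "Km_consistent (\<Union>C)"
      by (rule Km_consistent_Union_chain[OF \<open>C \<noteq> {}\<close>])
    ultimately show "\<Union>C \<in> ?A" by blast
  qed
  then obtain D where "D \<in> ?A" and "\<forall>X\<in>?A. D \<subseteq> X \<longrightarrow> X = D" by blast
  then show thesis
    using that[of D] unfolding Km_maximal_consistent_def by blast
qed

theorem mainTheorem2:
  fixes \<Gamma> :: "form set" and \<alpha> :: form
  shows "Km_entails \<Gamma> \<alpha> \<Longrightarrow> Km_derives \<Gamma> \<alpha>"
proof (rule ccontr)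
  assume entails: "Km_entails \<Gamma> \<alpha>" and "\<not> Km_derives \<Gamma> \<alpha>"
  then have "Km_consistent (insert (Neg \<alpha>) \<Gamma>)"
    using Km_consistent_insert_Neg by blast
  then obtain D where D: "insert (Neg \<alpha>) \<Gamma> \<subseteq> D" and max: "Km_maximal_consistent D"
    by (rule Km_maximal_consistent_extension)
  interpret Km_maximal_consistent D by (fact max)
  have "\<forall>g\<in>\<Gamma>. canonical_val g \<in> designated"
    using D canonical_val_designated_iff by blast
  with entails have "\<alpha> \<in> D"
    using Km_valuation_canonical_val canonical_val_designated_iff
    unfolding Km_entails_def by blast
  with D show False using Neg_mem_iff by blast
qed

end
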